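(* Let $G$ be an undirected graph with at least one edge. For every integer $k\ge 1$, $$\Big(1-\frac1k\Big)\,\mathsf{OPT}\;\le\;\mathsf{OPT}_k\;\le\;1-\frac1k .$$
   Context: Let $G=(V,E)$ be a finite simple undirected graph with $n=|V|$ nodes and $m=|E|\ge1$ edges, let $d_v$ be the degree of $v$, and let $a_{u,v}=1$ if $\{u,v\}\in E$ and $a_{u,v}=0$ otherwise. For $C\subseteq V$ the modularity of $C$ is $\mathsf M(C)=\frac{1}{2m}\sum_{u\in C}\sum_{v\in C}\big(a_{u,v}-\frac{d_ud_v}{2m}\big)$, the sum ranging over all ordered pairs $(u,v)$ of nodes of $C$, including $u=v$. A clustering is a partition $\mathcal S$ of $V$ into nonempty sets (clusters); its modularity is $\mathsf M(\mathcal S)=\sum_{C\in\mathcal S}\mathsf M(C)$. $\mathsf{OPT}$ is the maximum of $\mathsf M(\mathcal S)$ over all clusterings, and $\mathsf{OPT}_k$ is the maximum of $\mathsf M(\mathcal S)$ over clusterings with at most $k$ clusters. *)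

theory Defs
  imports Complex_Main
begin

definition simple_graph :: "'a set \<Rightarrow> 'a set set \<Rightarrow> bool" where
  "simple_graph V E \<longleftrightarrow> finite V \<and> (\<forall>e\<in>E. e \<subseteq> V \<and> card e = 2)"

definition adj :: "'a set set \<Rightarrow> 'a \<Rightarrow> 'a \<Rightarrow> real" where
  "adj E u v = (if {u, v} \<in> E then 1 else 0)"

definition degree :: "'a set \<Rightarrow> 'a set set \<Rightarrow> 'a \<Rightarrow> real" where
  "degree V E v = real (card {u \<in> V. {u, v} \<in> E})"

definition num_edges :: "'a set set \<Rightarrow> real" where
  "num_edges E = real (card E)"

definition modularity_cluster :: "'a set \<Rightarrow> 'a set set \<Rightarrow> 'a set \<Rightarrow> real" where
  "modularity_cluster V E C =
     (1 / (2 * num_edges E)) *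
     (\<Sum>u\<in>C. \<Sum>v\<in>C. adj E u v - degree V E u * degree V E v / (2 * num_edges E))"

definition clustering :: "'a set \<Rightarrow> 'a set set \<Rightarrow> bool" where
  "clustering V S \<longleftrightarrow> \<Union>S = V \<and> (\<forall>C\<in>S. C \<noteq> {}) \<and>
     (\<forall>C\<in>S. \<forall>D\<in>S. C \<noteq> D \<longrightarrow> C \<inter> D = {})"

definition modularity :: "'a set \<Rightarrow> 'a set set \<Rightarrow> 'a set set \<Rightarrow> real" where
  "modularity V E S = (\<Sum>C\<in>S. modularity_cluster V E C)"

definition OPT :: "'a set \<Rightarrow> 'a set set \<Rightarrow> real" where
  "OPT V E = Max (modularity V E ` {S. clustering V S})"

definition OPT_k :: "'a set \<Rightarrow> 'a set set \<Rightarrow> nat \<Rightarrow> real" where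
  "OPT_k V E k = Max (modularity V E ` {S. clustering V S \<and> card S \<le> k})"

end

theory Submission
  imports Defs "HOL-Analysis.Convex"
begin

(* Write w(u,v) = (a_uv - d_u d_v / 2m) / 2m, so that the modularity of a cluster C is the
   block sum of w over C x C, and the block sum over V x V vanishes (handshake lemma).

   Upper bound: a clustering S splits into an edge part, at most 1, minus the sum of the
   squared degree fractions x_C of its clusters; since the x_C sum to 1, the inequality
   between arithmetic and quadratic mean gives a sum of squares of at least 1/|S| >= 1/k.

   Lower bound: take an optimal clustering S and the matrix x(C,D) of block sums of w.  A
   greedy labelling of S with k labels, assigning each cluster the label whose class already
   carries at least the average share of its interaction, keeps block mass at least
   (1 - 1/k) * trace x + (1/k) * total x.  Here trace x = OPT and total x = 0, and merging the
   clusters of each label class yields a clustering with at most k clusters and modularity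
   at least (1 - 1/k) * OPT. *)

lemma nonempty_graph_basics:
  assumes "simple_graph V E" "E \<noteq> {}"
  shows "finite V" "finite E" "num_edges E > 0"
proof -
  show fV: "finite V" using assms unfolding simple_graph_def by auto
  have "E \<subseteq> Pow V" using assms unfolding simple_graph_def by auto
  then show "finite E" using fV by (meson finite_Pow_iff rev_finite_subset)
  then show "num_edges E > 0" using assms(2) unfolding num_edges_def by (simp add: card_gt_0_iff)
qed

lemma degree_eq_incident_edges:
  assumes "simple_graph V E"
  shows "degree V E u = real (card {e\<in>E. u \<in> e})"
proof -
  have "bij_betw (\<lambda>v. {v, u}) {v\<in>V. {v, u} \<in> E} {e\<in>E. u \<in> e}"
  proof (rule bij_betwI')
    fix x y
    show "({x, u} = {y, u}) = (x = y)" by (metis doubleton_eq_iff)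
  next
    fix x assume "x \<in> {v\<in>V. {v, u} \<in> E}"
    then show "{x, u} \<in> {e\<in>E. u \<in> e}" by auto
  next
    fix e assume e: "e \<in> {e\<in>E. u \<in> e}"
    then have "e \<subseteq> V" "card e = 2" using assms unfolding simple_graph_def by auto
    then obtain a b where ab: "e = {a, b}" "a \<noteq> b" by (meson card_2_iff)
    show "\<exists>x\<in>{v\<in>V. {v, u} \<in> E}. e = {x, u}"
    proof (cases "u = a")
      case True
      then show ?thesis using ab e \<open>e \<subseteq> V\<close> by (intro bexI[of _ b]) (auto simp: insert_commute)
    next
      case False
      then have "u = b" using ab e by auto
      then show ?thesis using ab e \<open>e \<subseteq> V\<close> by (intro bexI[of _ a]) auto
    qed
  qed
  then show ?thesis unfolding degree_def by (simp add: bij_betw_same_card)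
qed

lemma handshake:
  assumes "simple_graph V E" "E \<noteq> {}"
  shows "(\<Sum>u\<in>V. degree V E u) = 2 * num_edges E"
proof -
  note fin = nonempty_graph_basics[OF assms]
  have "(\<Sum>u\<in>V. degree V E u) = (\<Sum>u\<in>V. \<Sum>e\<in>E. if u \<in> e then 1 else 0)"
    using degree_eq_incident_edges[OF assms(1)] fin by (simp add: sum.If_cases Int_def)
  also have "\<dots> = (\<Sum>e\<in>E. \<Sum>u\<in>V. if u \<in> e then 1 else 0)" by (rule sum.swap)
  also have "\<dots> = (\<Sum>e\<in>E. 2)"
  proof (rule sum.cong)
    fix e assume "e \<in> E"
    then have "e \<subseteq> V" "card e = 2" using assms unfolding simple_graph_def by auto
    then show "(\<Sum>u\<in>V. if u \<in> e then 1 else 0) = (2::real)"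
      using fin by (simp add: sum.If_cases Int_absorb1)
  qed simp
  finally show ?thesis unfolding num_edges_def by simp
qed

lemma adjacency_row_sum:
  assumes "finite V"
  shows "(\<Sum>v\<in>V. adj E u v) = degree V E u"
proof -
  have "(\<Sum>v\<in>V. adj E u v) = real (card {v\<in>V. {u,v} \<in> E})"
    unfolding adj_def using assms by (simp add: sum.If_cases Int_def)
  also have "{v\<in>V. {u,v} \<in> E} = {v\<in>V. {v,u} \<in> E}" by (auto simp: insert_commute)
  finally show ?thesis unfolding degree_def .
qed

lemma clustering_finite:
  assumes "clustering V S" "finite V"
  shows "finite S" "\<And>C. C \<in> S \<Longrightarrow> C \<subseteq> V" "\<And>C. C \<in> S \<Longrightarrow> finite C"
proof -
  show sub: "\<And>C. C \<in> S \<Longrightarrow> C \<subseteq> V" using assms unfolding clustering_def by auto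
  then have "S \<subseteq> Pow V" by auto
  then show "finite S" using assms(2) by (meson finite_Pow_iff rev_finite_subset)
  show "\<And>C. C \<in> S \<Longrightarrow> finite C" using sub assms(2) rev_finite_subset by blast
qed

lemma sum_over_clustering:
  assumes "clustering V S" "finite V"
  shows "(\<Sum>C\<in>S. \<Sum>u\<in>C. f u) = (\<Sum>u\<in>V. f u)"
proof -
  have "(\<Sum>u\<in>\<Union>S. f u) = (\<Sum>C\<in>S. \<Sum>u\<in>C. f u)"
    using sum.Union_disjoint[of S f] clustering_finite[OF assms] assms(1)
    unfolding clustering_def by auto
  then show ?thesis using assms(1) unfolding clustering_def by simp
qed

lemma cluster_selector:
  assumes "clustering V S"
  obtains cl where "\<And>C u. C \<in> S \<Longrightarrow> u \<in> C \<Longrightarrow> cl u = C"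
proof
  fix C u assume CS: "C \<in> S" and uC: "u \<in> C"
  have "\<exists>C. C \<in> S \<and> u \<in> C" using CS uC by blast
  then have "(SOME C. C \<in> S \<and> u \<in> C) \<in> S \<and> u \<in> (SOME C. C \<in> S \<and> u \<in> C)"
    by (rule someI_ex)
  then show "(SOME C. C \<in> S \<and> u \<in> C) = C" using CS uC assms unfolding clustering_def by blast
qed

lemma block_sum_transfer:
  fixes F :: "'a set \<Rightarrow> 'a set \<Rightarrow> real"
  assumes "clustering V S" "finite V" "\<And>C u. C \<in> S \<Longrightarrow> u \<in> C \<Longrightarrow> cl u = C"
  shows "(\<Sum>C\<in>S. \<Sum>D\<in>S. F C D * (\<Sum>u\<in>C. \<Sum>v\<in>D. f u v))
       = (\<Sum>u\<in>V. \<Sum>v\<in>V. F (cl u) (cl v) * f u v)"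
proof -
  have "(\<Sum>C\<in>S. \<Sum>D\<in>S. F C D * (\<Sum>u\<in>C. \<Sum>v\<in>D. f u v))
      = (\<Sum>C\<in>S. \<Sum>D\<in>S. \<Sum>u\<in>C. \<Sum>v\<in>D. F (cl u) (cl v) * f u v)"
    using assms(3) by (simp add: sum_distrib_left)
  also have "\<dots> = (\<Sum>C\<in>S. \<Sum>u\<in>C. \<Sum>D\<in>S. \<Sum>v\<in>D. F (cl u) (cl v) * f u v)"
    by (rule sum.cong[OF refl], rule sum.swap)
  also have "\<dots> = (\<Sum>u\<in>V. \<Sum>v\<in>V. F (cl u) (cl v) * f u v)"
    by (simp add: sum_over_clustering[OF assms(1,2)])
  finally show ?thesis .
qed

definition modularity_weight :: "'a set \<Rightarrow> 'a set set \<Rightarrow> 'a \<Rightarrow> 'a \<Rightarrow> real" where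
  "modularity_weight V E u v =
     (adj E u v - degree V E u * degree V E v / (2 * num_edges E)) / (2 * num_edges E)"

lemma modularity_cluster_weight_sum:
  "modularity_cluster V E C = (\<Sum>u\<in>C. \<Sum>v\<in>C. modularity_weight V E u v)"
  unfolding modularity_cluster_def modularity_weight_def
  by (simp add: sum_distrib_left sum_divide_distrib)

lemma weight_block_sum:
  assumes "simple_graph V E" "E \<noteq> {}"
  shows "(\<Sum>u\<in>C. \<Sum>v\<in>C. modularity_weight V E u v)
       = (\<Sum>u\<in>C. \<Sum>v\<in>C. adj E u v) / (2 * num_edges E)
         - ((\<Sum>u\<in>C. degree V E u) / (2 * num_edges E))\<^sup>2"
proof -
  have "modularity_weight V E u v = adj E u v / (2 * num_edges E)
      - (degree V E u / (2 * num_edges E)) * (degree V E v / (2 * num_edges E))" for u v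
    using nonempty_graph_basics[OF assms] unfolding modularity_weight_def
    by (simp add: field_simps)
  then show ?thesis unfolding power2_eq_square
    by (simp add: sum_subtractf sum_divide_distrib sum_distrib_left sum_distrib_right;
        simp add: mult_ac)
qed

lemma weight_total_zero:
  assumes "simple_graph V E" "E \<noteq> {}"
  shows "(\<Sum>u\<in>V. \<Sum>v\<in>V. modularity_weight V E u v) = 0"
proof -
  note fin = nonempty_graph_basics[OF assms]
  have "(\<Sum>u\<in>V. \<Sum>v\<in>V. adj E u v) = 2 * num_edges E"
    using adjacency_row_sum[OF fin(1)] handshake[OF assms] by simp
  then show ?thesis unfolding weight_block_sum[OF assms] handshake[OF assms] using fin by simp
qed

section \<open>Upper bound\<close>

lemma intra_cluster_adjacency_le:
  assumes "simple_graph V E" "E \<noteq> {}" "clustering V S"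
  shows "(\<Sum>C\<in>S. \<Sum>u\<in>C. \<Sum>v\<in>C. adj E u v) \<le> 2 * num_edges E"
proof -
  note fin = nonempty_graph_basics[OF assms(1,2)]
  have "(\<Sum>C\<in>S. \<Sum>u\<in>C. \<Sum>v\<in>C. adj E u v) \<le> (\<Sum>C\<in>S. \<Sum>u\<in>C. \<Sum>v\<in>V. adj E u v)"
    using clustering_finite(2)[OF assms(3) fin(1)] fin(1)
    by (intro sum_mono sum_mono2) (auto simp: adj_def)
  also have "\<dots> = (\<Sum>u\<in>V. \<Sum>v\<in>V. adj E u v)" by (rule sum_over_clustering[OF assms(3) fin(1)])
  also have "\<dots> = 2 * num_edges E"
    using adjacency_row_sum[OF fin(1)] handshake[OF assms(1,2)] by simp
  finally show ?thesis .
qed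

lemma modularity_upper_bound:
  assumes "simple_graph V E" "E \<noteq> {}" "clustering V S" "card S \<le> k"
  shows "modularity V E S \<le> 1 - 1 / real k"
proof -
  note fin = nonempty_graph_basics[OF assms(1,2)]
  define m2 where "m2 = 2 * num_edges E"
  have m2: "m2 > 0" using fin unfolding m2_def by simp
  define x where "x C = (\<Sum>u\<in>C. degree V E u) / m2" for C
  have decomp: "modularity V E S = (\<Sum>C\<in>S. \<Sum>u\<in>C. \<Sum>v\<in>C. adj E u v) / m2 - (\<Sum>C\<in>S. (x C)\<^sup>2)"
    unfolding modularity_def modularity_cluster_weight_sum weight_block_sum[OF assms(1,2)]
      x_def m2_def
    by (simp add: sum_subtractf sum_divide_distrib)
  have edge_part: "(\<Sum>C\<in>S. \<Sum>u\<in>C. \<Sum>v\<in>C. adj E u v) / m2 \<le> 1"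
    using intra_cluster_adjacency_le[OF assms(1-3)] m2 unfolding m2_def by simp
  have x_sum: "(\<Sum>C\<in>S. x C) = 1"
    unfolding x_def sum_divide_distrib[symmetric] sum_over_clustering[OF assms(3) fin(1)]
    using handshake[OF assms(1,2)] m2 m2_def by simp
  have card_pos: "real (card S) > 0"
    using assms(3) x_sum clustering_finite(1)[OF assms(3) fin(1)] card_gt_0_iff by fastforce
  have "1 \<le> (\<Sum>C\<in>S. (x C)\<^sup>2) * real (card S)"
    using sum_squared_le_sum_of_squares[of x S] x_sum by simp
  then have "1 / real (card S) \<le> (\<Sum>C\<in>S. (x C)\<^sup>2)"
    using card_pos by (simp add: divide_le_eq mult.commute)
  moreover have "1 / real k \<le> 1 / real (card S)"
    using card_pos assms(4) by (simp add: frac_le)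
  ultimately show ?thesis using decomp edge_part by linarith
qed

section \<open>Greedy labelling of a square matrix\<close>

definition label_sum :: "'b set \<Rightarrow> ('b \<Rightarrow> nat) \<Rightarrow> ('b \<Rightarrow> 'b \<Rightarrow> real) \<Rightarrow> real" where
  "label_sum I g x = (\<Sum>i\<in>I. \<Sum>j\<in>I. if g i = g j then x i j else 0)"

lemma class_above_average:
  fixes y :: "'b \<Rightarrow> real" and g :: "'b \<Rightarrow> nat"
  assumes "finite F" "k \<ge> 1" "\<And>j. g j < k"
  shows "\<exists>c<k. (1 / real k) * (\<Sum>j\<in>F. y j) \<le> (\<Sum>j\<in>{j\<in>F. g j = c}. y j)"
proof (rule ccontr)
  assume "\<not> ?thesis"
  then have below: "\<And>c. c \<in> {..<k} \<Longrightarrow>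
      (\<Sum>j\<in>{j\<in>F. g j = c}. y j) < (1 / real k) * (\<Sum>j\<in>F. y j)"
    by auto
  have "(\<Sum>j\<in>F. y j) = (\<Sum>c\<in>{..<k}. \<Sum>j\<in>{j\<in>F. g j = c}. y j)"
    by (rule sum.group[symmetric]) (use assms in auto)
  also have "\<dots> < (\<Sum>c\<in>{..<k}. (1 / real k) * (\<Sum>j\<in>F. y j))"
    by (rule sum_strict_mono[OF _ _ below]) (use assms(2) in \<open>auto simp: lessThan_empty_iff\<close>)
  also have "\<dots> = (\<Sum>j\<in>F. y j)" using assms(2) by simp
  finally show False by simp
qed

lemma label_sum_insert:
  assumes "finite F" "a \<notin> F"
  shows "label_sum (insert a F) (g(a := c)) x
       = x a a + (\<Sum>j\<in>{j\<in>F. g j = c}. x a j + x j a) + label_sum F g x"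
proof -
  have upd: "\<And>j. j \<in> F \<Longrightarrow> (g(a := c)) j = g j" using assms(2) by auto
  have expand: "label_sum (insert a F) (g(a := c)) x
      = x a a + (\<Sum>j\<in>F. if c = g j then x a j else 0) + (\<Sum>j\<in>F. if g j = c then x j a else 0)
        + label_sum F g x"
    using assms upd unfolding label_sum_def by (simp add: sum.distrib algebra_simps cong: sum.cong)
  have "(\<Sum>j\<in>{j\<in>F. g j = c}. x a j + x j a) = (\<Sum>j\<in>F. if g j = c then x a j + x j a else 0)"
    using assms(1) by (simp add: sum.inter_filter)
  also have "\<dots> = (\<Sum>j\<in>F. if c = g j then x a j else 0) + (\<Sum>j\<in>F. if g j = c then x j a else 0)"
    unfolding sum.distrib[symmetric] by (rule sum.cong) auto
  finally show ?thesis using expand by simp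
qed

lemma greedy_labelling:
  fixes x :: "'b \<Rightarrow> 'b \<Rightarrow> real" and k :: nat
  assumes "finite I" "k \<ge> 1"
  shows "\<exists>g. (\<forall>i. g i < k) \<and>
    (1 - 1 / real k) * (\<Sum>i\<in>I. x i i) + (1 / real k) * (\<Sum>i\<in>I. \<Sum>j\<in>I. x i j)
      \<le> label_sum I g x"
  using assms(1)
proof (induction I rule: finite_induct)
  case empty
  show ?case using assms(2) by (intro exI[of _ "\<lambda>_. 0"]) (auto simp: label_sum_def)
next
  case (insert a F)
  then obtain g where labels: "\<forall>i. g i < k" and IH:
    "(1 - 1 / real k) * (\<Sum>i\<in>F. x i i) + (1 / real k) * (\<Sum>i\<in>F. \<Sum>j\<in>F. x i j)
      \<le> label_sum F g x" by blast
  obtain c where "c < k" and best: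
    "(1 / real k) * (\<Sum>j\<in>F. x a j + x j a) \<le> (\<Sum>j\<in>{j\<in>F. g j = c}. x a j + x j a)"
    using class_above_average[OF insert(1) assms(2), where g = g and y = "\<lambda>j. x a j + x j a"]
      labels by blast
  have new_labels: "\<forall>i. (g(a := c)) i < k" using labels \<open>c < k\<close> by simp
  have "(1 - 1 / real k) * (\<Sum>i\<in>insert a F. x i i)
        + (1 / real k) * (\<Sum>i\<in>insert a F. \<Sum>j\<in>insert a F. x i j)
      = x a a + (1 / real k) * (\<Sum>j\<in>F. x a j + x j a)
        + ((1 - 1 / real k) * (\<Sum>i\<in>F. x i i) + (1 / real k) * (\<Sum>i\<in>F. \<Sum>j\<in>F. x i j))"
    (is "?bound = _")
    using insert(1,2) by (simp add: sum.distrib algebra_simps)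
  also have "\<dots> \<le> label_sum (insert a F) (g(a := c)) x"
    unfolding label_sum_insert[OF insert(1,2)] using best IH by linarith
  finally have "?bound \<le> label_sum (insert a F) (g(a := c)) x" .
  then show ?case by (intro exI[of _ "g(a := c)"] conjI[OF new_labels])
qed

section \<open>Merging clusters along a labelling\<close>

definition label_partition :: "'a set \<Rightarrow> ('a \<Rightarrow> 'b) \<Rightarrow> 'a set set" where
  "label_partition V h = (\<lambda>i. {u\<in>V. h u = i}) ` (h ` V)"

lemma label_partition_clustering: "clustering V (label_partition V h)"
  unfolding clustering_def label_partition_def by auto

lemma label_partition_card: "finite V \<Longrightarrow> card (label_partition V h) \<le> card (h ` V)"
  unfolding label_partition_def by (rule card_image_le) simp

lemma label_partition_modularity:
  assumes "finite V"
  shows "modularity V E (label_partition V h)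
       = (\<Sum>u\<in>V. \<Sum>v\<in>V. if h u = h v then modularity_weight V E u v else 0)"
proof -
  have "modularity V E (label_partition V h)
      = (\<Sum>B\<in>label_partition V h. \<Sum>u\<in>B. \<Sum>v\<in>V. if h u = h v then modularity_weight V E u v else 0)"
    unfolding modularity_def modularity_cluster_weight_sum
  proof (rule sum.cong[OF refl], rule sum.cong[OF refl])
    fix B u assume "B \<in> label_partition V h" "u \<in> B"
    then have "B = {v\<in>V. h u = h v}" unfolding label_partition_def by auto
    then show "(\<Sum>v\<in>B. modularity_weight V E u v)
        = (\<Sum>v\<in>V. if h u = h v then modularity_weight V E u v else 0)"
      using assms by (simp add: sum.inter_filter)
  qed
  also have "\<dots> = (\<Sum>u\<in>V. \<Sum>v\<in>V. if h u = h v then modularity_weight V E u v else 0)"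
    by (rule sum_over_clustering[OF label_partition_clustering assms])
  finally show ?thesis .
qed

lemma merged_clustering_modularity:
  assumes "clustering V S" "finite V" "\<And>C u. C \<in> S \<Longrightarrow> u \<in> C \<Longrightarrow> cl u = C"
  shows "modularity V E (label_partition V (g \<circ> cl))
       = label_sum S g (\<lambda>C D. \<Sum>u\<in>C. \<Sum>v\<in>D. modularity_weight V E u v)"
proof -
  have "label_sum S g (\<lambda>C D. \<Sum>u\<in>C. \<Sum>v\<in>D. modularity_weight V E u v)
      = (\<Sum>C\<in>S. \<Sum>D\<in>S. (if g C = g D then 1 else 0) * (\<Sum>u\<in>C. \<Sum>v\<in>D. modularity_weight V E u v))"
    unfolding label_sum_def by (intro sum.cong refl) simp
  also have "\<dots> = (\<Sum>u\<in>V. \<Sum>v\<in>V. (if g (cl u) = g (cl v) then 1 else 0) * modularity_weight V E u v)"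
    by (rule block_sum_transfer[OF assms])
  also have "\<dots> = modularity V E (label_partition V (g \<circ> cl))"
    unfolding label_partition_modularity[OF assms(2)] by (intro sum.cong refl) simp
  finally show ?thesis by simp
qed

lemma coarsening_bound:
  assumes "simple_graph V E" "E \<noteq> {}" "k \<ge> 1" "clustering V S"
  shows "\<exists>S'. clustering V S' \<and> card S' \<le> k
           \<and> (1 - 1 / real k) * modularity V E S \<le> modularity V E S'"
proof -
  note fin = nonempty_graph_basics[OF assms(1,2)]
  obtain cl where cl: "\<And>C u. C \<in> S \<Longrightarrow> u \<in> C \<Longrightarrow> cl u = C"
    using cluster_selector[OF assms(4)] by blast
  define x where "x C D = (\<Sum>u\<in>C. \<Sum>v\<in>D. modularity_weight V E u v)" for C D
  obtain g where labels: "\<forall>i. g i < k" and greedy: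
    "(1 - 1 / real k) * (\<Sum>C\<in>S. x C C) + (1 / real k) * (\<Sum>C\<in>S. \<Sum>D\<in>S. x C D)
      \<le> label_sum S g x"
    using greedy_labelling[OF clustering_finite(1)[OF assms(4) fin(1)] assms(3)] by blast
  have trace: "(\<Sum>C\<in>S. x C C) = modularity V E S"
    unfolding modularity_def modularity_cluster_weight_sum x_def ..
  have total: "(\<Sum>C\<in>S. \<Sum>D\<in>S. x C D) = 0"
    using block_sum_transfer[OF assms(4) fin(1) cl, where F="\<lambda>_ _. 1"]
      weight_total_zero[OF assms(1,2)]
    unfolding x_def by simp
  define S' where "S' = label_partition V (g \<circ> cl)"
  have "card S' \<le> card ((g \<circ> cl) ` V)" unfolding S'_def by (rule label_partition_card[OF fin(1)])
  also have "\<dots> \<le> card {..<k}" by (rule card_mono) (use labels in auto)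
  finally have "card S' \<le> k" by simp
  moreover have "(1 - 1 / real k) * modularity V E S \<le> modularity V E S'"
    using greedy trace total merged_clustering_modularity[OF assms(4) fin(1) cl]
    unfolding S'_def x_def by simp
  ultimately show ?thesis using label_partition_clustering unfolding S'_def by blast
qed

lemma finite_clusterings: "finite V \<Longrightarrow> finite {S. clustering V S}"
  by (rule finite_subset[of _ "Pow (Pow V)"]) (auto simp: clustering_def)

lemma trivial_clustering: "\<exists>S. clustering V S \<and> card S \<le> 1"
proof (cases "V = {}")
  case True
  then show ?thesis by (intro exI[of _ "{}"]) (auto simp: clustering_def)
next
  case False
  then show ?thesis by (intro exI[of _ "{V}"]) (auto simp: clustering_def)
qed

text \<open>Both optima are attained, since some clustering with one cluster always exists.\<close>
lemma OPT_attained: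
  assumes "finite V"
  obtains S where "clustering V S" "OPT V E = modularity V E S"
proof -
  have "OPT V E \<in> modularity V E ` {S. clustering V S}"
    unfolding OPT_def using finite_clusterings[OF assms] trivial_clustering
    by (intro Max_in) auto
  then show ?thesis using that by blast
qed

lemma OPT_k_attained:
  assumes "finite V" "k \<ge> 1"
  obtains S where "clustering V S" "card S \<le> k" "OPT_k V E k = modularity V E S"
proof -
  have "OPT_k V E k \<in> modularity V E ` {S. clustering V S \<and> card S \<le> k}"
    unfolding OPT_k_def using finite_clusterings[OF assms(1)] trivial_clustering assms(2)
    by (intro Max_in) (auto intro: finite_subset dest: le_trans)
  then show ?thesis using that by blast
qed

lemma OPT_k_ge:
  assumes "finite V" "clustering V S" "card S \<le> k"
  shows "modularity V E S \<le> OPT_k V E k"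
  unfolding OPT_k_def using finite_clusterings[OF assms(1)] assms(2,3)
  by (intro Max_ge) (auto intro: finite_subset)

theorem lemma1:
  fixes V :: "'a set" and E :: "'a set set" and k :: nat
  assumes "simple_graph V E" and "E \<noteq> {}" and "k \<ge> 1"
  shows "(1 - 1 / real k) * OPT V E \<le> OPT_k V E k \<and> OPT_k V E k \<le> 1 - 1 / real k"
proof
  note fin = nonempty_graph_basics[OF assms(1,2)]
  obtain S where "clustering V S" "OPT V E = modularity V E S"
    using OPT_attained[OF fin(1)] .
  then obtain S' where S': "clustering V S'" "card S' \<le> k"
      "(1 - 1 / real k) * OPT V E \<le> modularity V E S'"
    using coarsening_bound[OF assms] by auto
  show "(1 - 1 / real k) * OPT V E \<le> OPT_k V E k"
    using S'(3) OPT_k_ge[OF fin(1) S'(1,2), where E = E] by linarith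
  obtain T where "clustering V T" "card T \<le> k" "OPT_k V E k = modularity V E T"
    using OPT_k_attained[OF fin(1) assms(3)] .
  then show "OPT_k V E k \<le> 1 - 1 / real k"
    using modularity_upper_bound[OF assms(1,2)] by simp
qed

end
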